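(* Let $\mathcal{X}$ be a set, $p\ge1$, $0<\alpha\le1$, $\kappa_1$ a positive definite kernel on $\mathcal{X}^p$ and $\kappa_2$ a positive definite kernel on $\mathcal{X}$. Let $\mathbf{x},\mathbf{x}'$ be time series in $\mathcal{X}$ of lengths $n,n'>p$, with $\mathbf{K}_1,\mathbf{K}_2,\Delta,g,f,C_{n,n'},\varphi_\kappa$ as in the context. Let $\mathbf{G}_1,\mathbf{G}_2\in\mathbf{S}_N^+$ satisfy $\mathbf{G}_1\preceq\mathbf{K}_1$ and $\mathbf{G}_2\preceq\mathbf{K}_1+\mathbf{K}_2$, and set $\varepsilon_1=\mathbf{K}_1-\mathbf{G}_1$, $\varepsilon_2=\mathbf{K}_1+\mathbf{K}_2-\mathbf{G}_2$. Then $$e^{-\varphi_\kappa(\mathbf{x},\mathbf{x}')}\le e^{-C_{n,n'}-f(\mathbf{G}_1,\mathbf{G}_2)}\le(1+\rho)\,e^{-\varphi_\kappa(\mathbf{x},\mathbf{x}')},$$ where $\rho=\exp\big((1-\alpha)\|\nabla g(\mathbf{G}_1)\|\,\|\varepsilon_1\|+\alpha\|\nabla g(\mathbf{G}_2)\|\,\|\varepsilon_2\|\big)-1$, with $\nabla g(Q)=(Q+\Delta^{-1})^{-1}$ and $\|\cdot\|$ the Frobenius norm.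
   Context: For $\mathbf{x}=(x_1,\dots,x_n)$, $\mathbf{x}_i^j=(x_i,\dots,x_j)$; $X=(\mathbf{x}_1^p,\mathbf{x}_2^{p+1},\dots,\mathbf{x}_{n-p}^{n-1})$ and $Y=(x_{p+1},\dots,x_n)$; $X',Y'$ likewise from $\mathbf{x}'$. For a tuple $\mathbf{v}=(v_1,\dots,v_m)$ and kernel $\kappa$, $\mathbf{K}^\kappa(\mathbf{v})=[\kappa(v_i,v_j)]_{i,j\le m}$; $\cdot$ is concatenation. $N=n+n'-2p$, $\mathbf{K}_1=\mathbf{K}^{\kappa_1}(X\cdot X')$, $\mathbf{K}_2=\mathbf{K}^{\kappa_2}(Y\cdot Y')$. $\Delta$ is the $N\times N$ diagonal matrix with first $n-p$ diagonal entries $\frac{1}{2(n-p)}$ and last $n'-p$ entries $\frac{1}{2(n'-p)}$. $\mathbf{S}_N^+$ is the cone of $N\times N$ symmetric positive semidefinite matrices; $A\preceq B$ means $B-A\in\mathbf{S}_N^+$. $g(Q)=\log|Q+\Delta^{-1}|$ ($|\cdot|$ the determinant), $f(Q,R)=(1-\alpha)g(Q)+\alpha g(R)$, $C_{n,n'}=(n-p)\log(2(n-p))+(n'-p)\log(2(n'-p))$, and $\varphi_\kappa(\mathbf{x},\mathbf{x}')=C_{n,n'}+f(\mathbf{K}_1,\mathbf{K}_1+\mathbf{K}_2)$. *)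

theory Defs
  imports Complex_Main "Jordan_Normal_Form.Determinant" "Jordan_Normal_Form.Gauss_Jordan_Elimination"
begin

(* positive (semi)definite kernel on a set S (ML convention: symmetric, all Gram matrices PSD) *)
definition pd_kernel :: "'b set \<Rightarrow> ('b \<Rightarrow> 'b \<Rightarrow> real) \<Rightarrow> bool" where
  "pd_kernel S \<kappa> \<longleftrightarrow> (\<forall>x\<in>S. \<forall>y\<in>S. \<kappa> x y = \<kappa> y x) \<and>
     (\<forall>xs c. set xs \<subseteq> S \<longrightarrow>
        0 \<le> (\<Sum>i<length xs. \<Sum>j<length xs. c i * c j * \<kappa> (xs ! i) (xs ! j)))"

definition psd_mat :: "nat \<Rightarrow> real mat \<Rightarrow> bool" where
  "psd_mat N A \<longleftrightarrow> A \<in> carrier_mat N N \<and> transpose_mat A = A \<and>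
     (\<forall>v \<in> carrier_vec N. 0 \<le> v \<bullet> (A *\<^sub>v v))"

definition loewner_le :: "nat \<Rightarrow> real mat \<Rightarrow> real mat \<Rightarrow> bool" where
  "loewner_le N A B \<longleftrightarrow> psd_mat N (B - A)"

definition gram :: "('b \<Rightarrow> 'b \<Rightarrow> real) \<Rightarrow> 'b list \<Rightarrow> real mat" where
  "gram \<kappa> v = mat (length v) (length v) (\<lambda>(i,j). \<kappa> (v ! i) (v ! j))"

(* X = (x_1^p, x_2^{p+1}, ..., x_{n-p}^{n-1})  (0-based: windows starting at 0..n-p-1) *)
definition windows :: "nat \<Rightarrow> 'a list \<Rightarrow> 'a list list" where
  "windows p x = map (\<lambda>i. take p (drop i x)) [0..<length x - p]"

definition targets :: "nat \<Rightarrow> 'a list \<Rightarrow> 'a list" where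
  "targets p x = drop p x"

definition Nsize :: "nat \<Rightarrow> nat \<Rightarrow> nat \<Rightarrow> nat" where
  "Nsize p n n' = n + n' - 2 * p"

definition Delta :: "nat \<Rightarrow> nat \<Rightarrow> nat \<Rightarrow> real mat" where
  "Delta p n n' = mat (Nsize p n n') (Nsize p n n')
     (\<lambda>(i,j). if i = j then (if i < n - p then 1 / (2 * real (n - p)) else 1 / (2 * real (n' - p))) else 0)"

definition Delta_inv :: "nat \<Rightarrow> nat \<Rightarrow> nat \<Rightarrow> real mat" where
  "Delta_inv p n n' = the (mat_inverse (Delta p n n'))"

definition g_fun :: "nat \<Rightarrow> nat \<Rightarrow> nat \<Rightarrow> real mat \<Rightarrow> real" where
  "g_fun p n n' Q = ln (det (Q + Delta_inv p n n'))"

definition f_fun :: "nat \<Rightarrow> nat \<Rightarrow> nat \<Rightarrow> real \<Rightarrow> real mat \<Rightarrow> real mat \<Rightarrow> real" where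
  "f_fun p n n' \<alpha> Q R = (1 - \<alpha>) * g_fun p n n' Q + \<alpha> * g_fun p n n' R"

definition C_const :: "nat \<Rightarrow> nat \<Rightarrow> nat \<Rightarrow> real" where
  "C_const p n n' = real (n - p) * ln (2 * real (n - p)) + real (n' - p) * ln (2 * real (n' - p))"

definition K1_mat :: "nat \<Rightarrow> ('a list \<Rightarrow> 'a list \<Rightarrow> real) \<Rightarrow> 'a list \<Rightarrow> 'a list \<Rightarrow> real mat" where
  "K1_mat p \<kappa>1 x x' = gram \<kappa>1 (windows p x @ windows p x')"

definition K2_mat :: "nat \<Rightarrow> ('a \<Rightarrow> 'a \<Rightarrow> real) \<Rightarrow> 'a list \<Rightarrow> 'a list \<Rightarrow> real mat" where
  "K2_mat p \<kappa>2 x x' = gram \<kappa>2 (targets p x @ targets p x')"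

definition phi_kernel :: "nat \<Rightarrow> real \<Rightarrow> ('a list \<Rightarrow> 'a list \<Rightarrow> real) \<Rightarrow> ('a \<Rightarrow> 'a \<Rightarrow> real)
    \<Rightarrow> 'a list \<Rightarrow> 'a list \<Rightarrow> real" where
  "phi_kernel p \<alpha> \<kappa>1 \<kappa>2 x x' =
     (let n = length x; n' = length x'; K1 = K1_mat p \<kappa>1 x x'; K2 = K2_mat p \<kappa>2 x x'
      in C_const p n n' + f_fun p n n' \<alpha> K1 (K1 + K2))"

definition grad_g :: "nat \<Rightarrow> nat \<Rightarrow> nat \<Rightarrow> real mat \<Rightarrow> real mat" where
  "grad_g p n n' Q = the (mat_inverse (Q + Delta_inv p n n'))"

definition frob_norm :: "real mat \<Rightarrow> real" where
  "frob_norm A = sqrt (\<Sum>i<dim_row A. \<Sum>j<dim_col A. (A $$ (i,j))\<^sup>2)"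

end

theory Submission
  imports Defs "HOL-Analysis.Convex"
begin

text \<open>Both inequalities follow from a perturbation bound for \<open>g(Q) = log det (Q + \<Delta>\<^sup>-\<^sup>1)\<close>:
  if \<open>P\<close> is positive definite and \<open>E \<succeq> 0\<close>, then
  \<open>0 \<le> log det (P + E) - log det P \<le> \<langle>P\<^sup>-\<^sup>1, E\<rangle>\<^sub>F \<le> \<parallel>P\<^sup>-\<^sup>1\<parallel>\<^sub>F \<parallel>E\<parallel>\<^sub>F\<close>,
  applied with \<open>P = G\<^sub>i + \<Delta>\<^sup>-\<^sup>1\<close> and \<open>E = \<epsilon>\<^sub>i\<close>, then averaged with weights \<open>1 - \<alpha>, \<alpha>\<close>
  and exponentiated. For the bound, reduce \<open>P\<close> to the identity by a congruence \<open>L P L\<^sup>T = 1\<close>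
  (successive Schur complements); then \<open>L (P + E) L\<^sup>T = 1 + M\<close> with \<open>M = L E L\<^sup>T \<succeq> 0\<close>, and
  Hadamard's inequality gives \<open>1 \<le> det (1 + M) \<le> \<Prod>\<^sub>i (1 + M\<^sub>i\<^sub>i)\<close>, so
  \<open>log det (1 + M) \<le> tr M = \<langle>L\<^sup>T L, E\<rangle>\<^sub>F\<close> with \<open>L\<^sup>T L = P\<^sup>-\<^sup>1\<close>.\<close>

definition pos_def_mat :: "nat \<Rightarrow> real mat \<Rightarrow> bool" where
  "pos_def_mat n A \<longleftrightarrow> A \<in> carrier_mat n n \<and> transpose_mat A = A \<and>
     (\<forall>v \<in> carrier_vec n. v \<noteq> 0\<^sub>v n \<longrightarrow> 0 < v \<bullet> (A *\<^sub>v v))"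

lemma transpose_eq_imp_entry_sym:
  assumes "transpose_mat A = A" "A \<in> carrier_mat n n" "i < n" "j < n"
  shows "A $$ (i,j) = A $$ (j,i)"
  using arg_cong[OF assms(1), of "\<lambda>M. M $$ (j,i)"] assms(2-4) by auto

definition quad_form :: "nat \<Rightarrow> real mat \<Rightarrow> (nat \<Rightarrow> real) \<Rightarrow> real" where
  "quad_form n A v = (\<Sum>i<n. v i * (\<Sum>j<n. A $$ (i,j) * v j))"

lemma quad_form_eq_scalar_prod:
  assumes "A \<in> carrier_mat n n"
  shows "quad_form n A v = vec n v \<bullet> (A *\<^sub>v vec n v)"
  using assms unfolding quad_form_def scalar_prod_def mult_mat_vec_def
  by (auto simp: atLeast0LessThan intro!: sum.cong)

lemma quad_form_unit_vec:
  assumes "i < n"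
  shows "quad_form n A (\<lambda>j. if j = i then 1 else 0) = A $$ (i,i)"
  using assms unfolding quad_form_def by (simp add: if_distrib if_distribR sum.delta cong: if_cong)

lemma diag_ge_one_if_quad_form_ge_norm:
  assumes "\<And>v. (\<Sum>i<n. (v i)\<^sup>2) \<le> quad_form n S v" and "i < n"
  shows "1 \<le> S $$ (i,i)"
proof -
  have "(\<Sum>j<n. (if j = i then 1 else 0 :: real)\<^sup>2) = (\<Sum>j<n. if j = i then 1 else 0)"
    by (rule sum.cong) auto
  then show ?thesis
    using assms(1)[of "\<lambda>j. if j = i then 1 else 0"] quad_form_unit_vec[OF assms(2), of S] assms(2)
    by simp
qed

definition schur_compl :: "real mat \<Rightarrow> nat \<Rightarrow> real mat" where
  "schur_compl P m = mat m m (\<lambda>(i,j). P $$ (Suc i, Suc j) - P $$ (Suc i, 0) * P $$ (0, Suc j) / P $$ (0,0))"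

lemma schur_compl_carrier [simp]: "schur_compl P m \<in> carrier_mat m m"
  unfolding schur_compl_def by simp

lemma schur_compl_entry_sym:
  assumes "\<And>i j. i < Suc m \<Longrightarrow> j < Suc m \<Longrightarrow> P $$ (i,j) = P $$ (j,i)" "i < m" "j < m"
  shows "schur_compl P m $$ (i,j) = schur_compl P m $$ (j,i)"
  using assms(2,3) assms(1)[of "Suc i" "Suc j"] assms(1)[of "Suc i" 0] assms(1)[of "Suc j" 0]
  by (simp add: schur_compl_def mult.commute)

text \<open>Minimising the quadratic form of \<open>P\<close> over the first coordinate leaves the quadratic form of
  the Schur complement; \<open>t\<close> is the minimiser.\<close>

lemma quad_form_schur_compl:
  fixes m :: nat and v :: "nat \<Rightarrow> real" and P :: "real mat"
  assumes "P $$ (0,0) \<noteq> 0"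
  defines "t \<equiv> - (\<Sum>j<m. P $$ (0, Suc j) * v j) / P $$ (0,0)"
  shows "quad_form m (schur_compl P m) v = quad_form (Suc m) P (\<lambda>i. if i = 0 then t else v (i - 1))"
proof -
  let ?c = "\<Sum>j<m. P $$ (0, Suc j) * v j"
  have "quad_form (Suc m) P (\<lambda>i. if i = 0 then t else v (i - 1))
     = t * (P $$ (0,0) * t + ?c) + (\<Sum>i<m. v i * (P $$ (Suc i, 0) * t + (\<Sum>j<m. P $$ (Suc i, Suc j) * v j)))"
    unfolding quad_form_def by (simp del: sum.lessThan_Suc add: sum.lessThan_Suc_shift algebra_simps)
  also have "t * (P $$ (0,0) * t + ?c) = 0" using assms by (simp add: t_def)
  also have "(\<Sum>i<m. v i * (P $$ (Suc i, 0) * t + (\<Sum>j<m. P $$ (Suc i, Suc j) * v j)))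
     = (\<Sum>i<m. v i * (\<Sum>j<m. (P $$ (Suc i, Suc j) - P $$ (Suc i, 0) * P $$ (0, Suc j) / P $$ (0,0)) * v j))"
  proof (rule sum.cong[OF refl])
    fix i
    have "(\<Sum>j<m. (P $$ (Suc i, Suc j) - P $$ (Suc i, 0) * P $$ (0, Suc j) / P $$ (0,0)) * v j)
       = (\<Sum>j<m. P $$ (Suc i, Suc j) * v j) - P $$ (Suc i, 0) / P $$ (0,0) * ?c"
      by (simp add: algebra_simps sum_subtractf sum_distrib_left sum_divide_distrib)
    moreover have "P $$ (Suc i, 0) * t = - (P $$ (Suc i, 0) / P $$ (0,0) * ?c)"
      by (simp add: t_def)
    ultimately show "v i * (P $$ (Suc i, 0) * t + (\<Sum>j<m. P $$ (Suc i, Suc j) * v j)) =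
      v i * (\<Sum>j<m. (P $$ (Suc i, Suc j) - P $$ (Suc i, 0) * P $$ (0, Suc j) / P $$ (0,0)) * v j)"
      by simp
  qed
  finally show ?thesis unfolding quad_form_def schur_compl_def by simp
qed

lemma schur_compl_quad_form_ge_norm:
  assumes "P $$ (0,0) \<noteq> 0" and "\<And>w. (\<Sum>i<Suc m. (w i)\<^sup>2) \<le> quad_form (Suc m) P w"
  shows "(\<Sum>i<m. (v i)\<^sup>2) \<le> quad_form m (schur_compl P m) v"
proof -
  define t where "t = - (\<Sum>j<m. P $$ (0, Suc j) * v j) / P $$ (0,0)"
  let ?w = "\<lambda>i. if i = 0 then t else v (i - 1)"
  have "(\<Sum>i<m. (v i)\<^sup>2) \<le> (\<Sum>i<Suc m. (?w i)\<^sup>2)"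
    by (simp del: sum.lessThan_Suc add: sum.lessThan_Suc_shift)
  also have "\<dots> \<le> quad_form (Suc m) P ?w" by (rule assms(2))
  also have "\<dots> = quad_form m (schur_compl P m) v"
    unfolding t_def by (rule quad_form_schur_compl[OF assms(1), symmetric])
  finally show ?thesis .
qed

lemma schur_compl_quad_form_pos:
  assumes "P $$ (0,0) \<noteq> 0" and "\<And>w. \<exists>i<Suc m. w i \<noteq> 0 \<Longrightarrow> 0 < quad_form (Suc m) P w"
    and "\<exists>i<m. v i \<noteq> 0"
  shows "0 < quad_form m (schur_compl P m) v"
proof -
  define t where "t = - (\<Sum>j<m. P $$ (0, Suc j) * v j) / P $$ (0,0)"
  let ?w = "\<lambda>i. if i = 0 then t else v (i - 1)"
  from assms(3) obtain i where "i < m" "v i \<noteq> 0" by auto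
  then have "\<exists>i<Suc m. ?w i \<noteq> 0" by (intro exI[of _ "Suc i"]) auto
  then have "0 < quad_form (Suc m) P ?w" by (rule assms(2))
  also have "\<dots> = quad_form m (schur_compl P m) v"
    unfolding t_def by (rule quad_form_schur_compl[OF assms(1), symmetric])
  finally show ?thesis .
qed

text \<open>For symmetric \<open>P\<close>, the congruence by this elimination matrix clears the first row and
  column, leaving \<open>P\<^sub>0\<^sub>0\<close> next to the Schur complement.\<close>

definition pivot_elim_mat :: "real mat \<Rightarrow> nat \<Rightarrow> real mat" where
  "pivot_elim_mat P n =
     mat n n (\<lambda>(i,j). if i = j then 1 else if j = 0 then - P $$ (i,0) / P $$ (0,0) else 0)"

lemma pivot_elim_mat_carrier [simp]: "pivot_elim_mat P n \<in> carrier_mat n n"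
  and dim_pivot_elim_mat [simp]: "dim_row (pivot_elim_mat P n) = n" "dim_col (pivot_elim_mat P n) = n"
  unfolding pivot_elim_mat_def by simp_all

lemma pivot_elim_mat_entry:
  "i < n \<Longrightarrow> j < n \<Longrightarrow> pivot_elim_mat P n $$ (i,j) =
     (if j = i then 1 else 0) + (if j = 0 \<and> i \<noteq> 0 then - P $$ (i,0) / P $$ (0,0) else 0)"
  unfolding pivot_elim_mat_def by auto

lemma det_pivot_elim_mat: "det (pivot_elim_mat P n) = 1"
proof -
  have "det (pivot_elim_mat P n) = prod_list (diag_mat (pivot_elim_mat P n))"
    by (rule det_lower_triangular[of n]) (auto simp: pivot_elim_mat_def)
  also have "diag_mat (pivot_elim_mat P n) = replicate n 1"
    by (auto simp: diag_mat_def pivot_elim_mat_def intro!: nth_equalityI)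
  finally show ?thesis by simp
qed

lemma pivot_elim_mat_mult_entry:
  assumes X: "X \<in> carrier_mat n nc" and "i < n" "k < nc"
  shows "(pivot_elim_mat P n * X) $$ (i,k) =
    X $$ (i,k) + (if i = 0 then 0 else - P $$ (i,0) / P $$ (0,0) * X $$ (0,k))"
proof -
  have "(pivot_elim_mat P n * X) $$ (i,k) = (\<Sum>j<n. pivot_elim_mat P n $$ (i,j) * X $$ (j,k))"
    using assms by (simp add: scalar_prod_def atLeast0LessThan mult.commute)
  also have "\<dots> = (\<Sum>j<n. (if j = i then X $$ (j,k) else 0) +
      (if j = 0 \<and> i \<noteq> 0 then - P $$ (i,0) / P $$ (0,0) * X $$ (j,k) else 0))"
    using assms by (intro sum.cong refl) (auto simp: pivot_elim_mat_entry)
  finally show ?thesis using assms by (simp add: sum.distrib sum.delta)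
qed

lemma mult_transpose_pivot_elim_mat_entry:
  assumes X: "X \<in> carrier_mat nr n" and "i < nr" "k < n"
  shows "(X * transpose_mat (pivot_elim_mat P n)) $$ (i,k) =
    X $$ (i,k) + (if k = 0 then 0 else - P $$ (k,0) / P $$ (0,0) * X $$ (i,0))"
proof -
  have "(X * transpose_mat (pivot_elim_mat P n)) $$ (i,k) = (\<Sum>j<n. X $$ (i,j) * pivot_elim_mat P n $$ (k,j))"
    using assms by (simp add: scalar_prod_def atLeast0LessThan mult.commute)
  also have "\<dots> = (\<Sum>j<n. (if j = k then X $$ (i,j) else 0) +
      (if j = 0 \<and> k \<noteq> 0 then - P $$ (k,0) / P $$ (0,0) * X $$ (i,j) else 0))"
    using assms by (intro sum.cong refl) (auto simp: pivot_elim_mat_entry)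
  finally show ?thesis using assms by (simp add: sum.distrib sum.delta)
qed

lemma pivot_elim_congruence:
  assumes P: "P \<in> carrier_mat (Suc m) (Suc m)"
    and sym: "\<And>i j. i < Suc m \<Longrightarrow> j < Suc m \<Longrightarrow> P $$ (i,j) = P $$ (j,i)"
    and "P $$ (0,0) \<noteq> 0"
  shows "pivot_elim_mat P (Suc m) * P * transpose_mat (pivot_elim_mat P (Suc m)) =
    four_block_mat (mat 1 1 (\<lambda>_. P $$ (0,0))) (0\<^sub>m 1 m) (0\<^sub>m m 1) (schur_compl P m)"
    (is "?T * P * transpose_mat ?T = ?B")
proof (rule eq_matI)
  have TP: "?T * P \<in> carrier_mat (Suc m) (Suc m)" using P by (metis pivot_elim_mat_carrier mult_carrier_mat)
  fix i j assume "i < dim_row ?B" "j < dim_col ?B"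
  then have i: "i < Suc m" and j: "j < Suc m" by (auto simp: schur_compl_def)
  have "(?T * P * transpose_mat ?T) $$ (i,j) =
      (?T * P) $$ (i,j) + (if j = 0 then 0 else - P $$ (j,0) / P $$ (0,0) * (?T * P) $$ (i,0))"
    by (rule mult_transpose_pivot_elim_mat_entry[OF TP i j])
  also have "\<dots> = ?B $$ (i,j)"
    unfolding pivot_elim_mat_mult_entry[OF P i j] pivot_elim_mat_mult_entry[OF P i zero_less_Suc]
    using i j assms sym[of 0 j] sym[of i 0] by (auto simp: schur_compl_def field_simps)
  finally show "(?T * P * transpose_mat ?T) $$ (i,j) = ?B $$ (i,j)" .
qed (use P in \<open>auto simp: schur_compl_def\<close>)

lemma det_eq_pivot_mult_det_schur_compl:
  assumes P: "P \<in> carrier_mat (Suc m) (Suc m)"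
    and sym: "\<And>i j. i < Suc m \<Longrightarrow> j < Suc m \<Longrightarrow> P $$ (i,j) = P $$ (j,i)"
    and p0: "P $$ (0,0) \<noteq> 0"
  shows "det P = P $$ (0,0) * det (schur_compl P m)"
proof -
  let ?T = "pivot_elim_mat P (Suc m)"
  have T: "?T \<in> carrier_mat (Suc m) (Suc m)" by simp
  have "det P = det (?T * P * transpose_mat ?T)"
    using P det_mult[OF mult_carrier_mat[OF T P], of "transpose_mat ?T"] det_mult[OF T P]
    by (simp add: det_transpose[OF T] det_pivot_elim_mat)
  also have "\<dots> = det (four_block_mat (mat 1 1 (\<lambda>_. P $$ (0,0))) (0\<^sub>m 1 m) (0\<^sub>m m 1) (schur_compl P m))"
    using pivot_elim_congruence[OF assms] by simp
  also have "\<dots> = det (mat 1 1 (\<lambda>_. P $$ (0,0))) * det (schur_compl P m)"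
    by (rule det_four_block_mat_lower_left_zero_col) auto
  also have "det (mat 1 1 (\<lambda>_. P $$ (0,0)) :: real mat) = P $$ (0,0)"
    by (subst det_single) auto
  finally show ?thesis .
qed


lemma det_bounds_if_quad_form_ge_norm:
  assumes "S \<in> carrier_mat n n" and "\<And>i j. i < n \<Longrightarrow> j < n \<Longrightarrow> S $$ (i,j) = S $$ (j,i)"
    and "\<And>v. (\<Sum>i<n. (v i)\<^sup>2) \<le> quad_form n S v"
  shows "1 \<le> det S \<and> det S \<le> (\<Prod>i<n. S $$ (i,i))"
  using assms
proof (induction n arbitrary: S)
  case 0
  then have "S = 1\<^sub>m 0" by (intro eq_matI) auto
  then show ?case by simp
next
  case (Suc m S)
  have s00: "1 \<le> S $$ (0,0)" by (rule diag_ge_one_if_quad_form_ge_norm[OF Suc.prems(3)]) simp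
  then have s0: "S $$ (0,0) \<noteq> 0" by auto
  have sym: "\<And>i j. i < m \<Longrightarrow> j < m \<Longrightarrow> schur_compl S m $$ (i,j) = schur_compl S m $$ (j,i)"
    by (rule schur_compl_entry_sym[OF Suc.prems(2)])
  note ge_norm = schur_compl_quad_form_ge_norm[OF s0 Suc.prems(3)]
  from Suc.IH[OF schur_compl_carrier sym ge_norm]
  have ih: "1 \<le> det (schur_compl S m)" "det (schur_compl S m) \<le> (\<Prod>i<m. schur_compl S m $$ (i,i))"
    by auto
  have det_S: "det S = S $$ (0,0) * det (schur_compl S m)"
    by (rule det_eq_pivot_mult_det_schur_compl[OF Suc.prems(1,2) s0])
  have "(\<Prod>i<m. schur_compl S m $$ (i,i)) \<le> (\<Prod>i<m. S $$ (Suc i, Suc i))"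
  proof (rule prod_mono)
    fix i assume i: "i \<in> {..<m}"
    have "1 \<le> schur_compl S m $$ (i,i)"
      using i by (intro diag_ge_one_if_quad_form_ge_norm[OF ge_norm]) simp
    moreover have "schur_compl S m $$ (i,i) \<le> S $$ (Suc i, Suc i)"
      using i s00 by (simp add: schur_compl_def Suc.prems(2)[of "Suc i" 0])
    ultimately show "0 \<le> schur_compl S m $$ (i,i) \<and> schur_compl S m $$ (i,i) \<le> S $$ (Suc i, Suc i)"
      by simp
  qed
  with ih(2) s00 have "det S \<le> S $$ (0,0) * (\<Prod>i<m. S $$ (Suc i, Suc i))"
    unfolding det_S by (simp add: mult_left_mono)
  also have "\<dots> = (\<Prod>i<Suc m. S $$ (i,i))"
    by (simp del: prod.lessThan_Suc add: prod.lessThan_Suc_shift)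
  finally have "det S \<le> (\<Prod>i<Suc m. S $$ (i,i))" .
  moreover have "1 * 1 \<le> det S"
    unfolding det_S using ih s00 by (intro mult_mono) auto
  ultimately show ?case by simp
qed

lemma mult_block_diag_mat:
  assumes "A1 \<in> carrier_mat k k" "D1 \<in> carrier_mat m m" "A2 \<in> carrier_mat k k" "D2 \<in> carrier_mat m m"
  shows "four_block_mat A1 (0\<^sub>m k m) (0\<^sub>m m k) D1 * four_block_mat A2 (0\<^sub>m k m) (0\<^sub>m m k) D2 =
    four_block_mat (A1 * A2) (0\<^sub>m k m) (0\<^sub>m m k) (D1 * D2)"
  using assms
  by (simp add: mult_four_block_mat[OF assms(1) zero_carrier_mat zero_carrier_mat assms(2)
        assms(3) zero_carrier_mat zero_carrier_mat assms(4)])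

lemma block_diag_congruence_one:
  fixes L S :: "real mat"
  assumes L: "L \<in> carrier_mat m m" and S: "S \<in> carrier_mat m m"
    and LS: "L * S * transpose_mat L = 1\<^sub>m m" and "c * a * c = 1"
  defines "D \<equiv> four_block_mat (mat 1 1 (\<lambda>_. c)) (0\<^sub>m 1 m) (0\<^sub>m m 1) L"
  shows "D * four_block_mat (mat 1 1 (\<lambda>_. a)) (0\<^sub>m 1 m) (0\<^sub>m m 1) S * transpose_mat D = 1\<^sub>m (Suc m)"
proof -
  let ?c = "mat 1 1 (\<lambda>_. c) :: real mat" and ?a = "mat 1 1 (\<lambda>_. a) :: real mat"
  have c: "?c \<in> carrier_mat 1 1" and a: "?a \<in> carrier_mat 1 1" by auto
  have Lt: "transpose_mat L \<in> carrier_mat m m" using L by simp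
  have DT: "transpose_mat D = four_block_mat ?c (0\<^sub>m 1 m) (0\<^sub>m m 1) (transpose_mat L)"
    unfolding D_def using L by (subst transpose_four_block_mat) (auto intro!: eq_matI)
  have "D * four_block_mat ?a (0\<^sub>m 1 m) (0\<^sub>m m 1) S * transpose_mat D =
      four_block_mat (?c * ?a * ?c) (0\<^sub>m 1 m) (0\<^sub>m m 1) (L * S * transpose_mat L)"
    unfolding DT unfolding D_def mult_block_diag_mat[OF c L a S]
    by (rule mult_block_diag_mat[OF mult_carrier_mat[OF c a] mult_carrier_mat[OF L S] c Lt])
  also have "?c * ?a * ?c = 1\<^sub>m 1"
    using assms(4) by (auto intro!: eq_matI simp: scalar_prod_def)
  finally show ?thesis using LS four_block_one_mat[of 1 m] by simp
qed

lemma pos_def_congruent_one: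
  assumes "P \<in> carrier_mat n n" and "\<And>i j. i < n \<Longrightarrow> j < n \<Longrightarrow> P $$ (i,j) = P $$ (j,i)"
    and "\<And>v. \<exists>i<n. v i \<noteq> 0 \<Longrightarrow> 0 < quad_form n P v"
  shows "\<exists>L \<in> carrier_mat n n. L * P * transpose_mat L = 1\<^sub>m n"
  using assms
proof (induction n arbitrary: P)
  case 0
  then show ?case by (intro bexI[of _ "1\<^sub>m 0"]) (auto intro!: eq_matI)
next
  case (Suc m P)
  have P: "P \<in> carrier_mat (Suc m) (Suc m)" by fact
  have p00: "0 < P $$ (0,0)"
    using Suc.prems(3)[of "\<lambda>j. if j = 0 then 1 else 0"] quad_form_unit_vec[of 0 "Suc m" P] by auto
  then have p0: "P $$ (0,0) \<noteq> 0" by auto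
  have sym: "\<And>i j. i < m \<Longrightarrow> j < m \<Longrightarrow> schur_compl P m $$ (i,j) = schur_compl P m $$ (j,i)"
    by (rule schur_compl_entry_sym[OF Suc.prems(2)])
  from Suc.IH[OF schur_compl_carrier sym schur_compl_quad_form_pos[OF p0 Suc.prems(3)]]
  obtain L where L: "L \<in> carrier_mat m m" and LS: "L * schur_compl P m * transpose_mat L = 1\<^sub>m m"
    by auto
  define c where "c = 1 / sqrt (P $$ (0,0))"
  have c: "c * P $$ (0,0) * c = 1" using p00 by (simp add: c_def)
  define D where "D = four_block_mat (mat 1 1 (\<lambda>_. c)) (0\<^sub>m 1 m) (0\<^sub>m m 1) L"
  let ?T = "pivot_elim_mat P (Suc m)"
  have D: "D \<in> carrier_mat (Suc m) (Suc m)" unfolding D_def using L by auto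
  have T: "?T \<in> carrier_mat (Suc m) (Suc m)" by simp
  have "(D * ?T) * P * transpose_mat (D * ?T) = D * (?T * P * transpose_mat ?T) * transpose_mat D"
    using D T P by (simp add: transpose_mult[OF D T] assoc_mult_mat[of _ "Suc m" "Suc m" _ "Suc m" _ "Suc m"]
        mult_carrier_mat[of _ "Suc m" "Suc m"])
  also have "\<dots> = 1\<^sub>m (Suc m)"
    using pivot_elim_congruence[OF P Suc.prems(2) p0]
      block_diag_congruence_one[OF L schur_compl_carrier LS c]
    by (simp add: D_def)
  finally show ?case using D T by (intro bexI[of _ "D * ?T"]) auto
qed

lemma frob_inner_le_frob_norm:
  fixes A B :: "real mat"
  assumes "A \<in> carrier_mat nr nc" "B \<in> carrier_mat nr nc"
  shows "(\<Sum>i<nr. \<Sum>j<nc. A $$ (i,j) * B $$ (i,j)) \<le> frob_norm A * frob_norm B"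
proof -
  let ?I = "{..<nr} \<times> {..<nc}"
  have "(\<Sum>i<nr. \<Sum>j<nc. A $$ (i,j) * B $$ (i,j)) = (\<Sum>k\<in>?I. A $$ k * B $$ k)"
    by (simp add: sum.cartesian_product case_prod_beta')
  also have "\<dots> \<le> sqrt ((\<Sum>k\<in>?I. A $$ k * B $$ k)\<^sup>2)" by simp
  also have "\<dots> \<le> sqrt ((\<Sum>k\<in>?I. (A $$ k)\<^sup>2) * (\<Sum>k\<in>?I. (B $$ k)\<^sup>2))"
    by (rule real_sqrt_le_mono[OF Cauchy_Schwarz_ineq_sum])
  also have "\<dots> = frob_norm A * frob_norm B"
    using assms by (simp add: frob_norm_def real_sqrt_mult sum.cartesian_product case_prod_beta')
  finally show ?thesis .
qed

lemma trace_congruence_eq_frob_inner: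
  fixes L E :: "real mat"
  assumes L: "L \<in> carrier_mat k n" and E: "E \<in> carrier_mat n n"
  shows "(\<Sum>i<k. (L * E * transpose_mat L) $$ (i,i)) =
    (\<Sum>j<n. \<Sum>l<n. (transpose_mat L * L) $$ (j,l) * E $$ (j,l))"
proof -
  have "(\<Sum>i<k. (L * E * transpose_mat L) $$ (i,i)) =
      (\<Sum>i<k. \<Sum>j<n. \<Sum>l<n. L $$ (i,j) * E $$ (j,l) * L $$ (i,l))"
    using L E by (intro sum.cong refl)
      (auto simp: scalar_prod_def atLeast0LessThan sum_distrib_left mult.assoc)
  also have "\<dots> = (\<Sum>j<n. \<Sum>l<n. \<Sum>i<k. L $$ (i,j) * E $$ (j,l) * L $$ (i,l))"
    by (subst sum.swap, rule sum.cong[OF refl], rule sum.swap)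
  also have "\<dots> = (\<Sum>j<n. \<Sum>l<n. (transpose_mat L * L) $$ (j,l) * E $$ (j,l))"
    using L E by (intro sum.cong refl) (auto simp: scalar_prod_def atLeast0LessThan
        sum_distrib_right sum_distrib_left mult.commute mult.left_commute)
  finally show ?thesis .
qed

lemma psd_mat_congruence:
  assumes E: "psd_mat n E" and L: "L \<in> carrier_mat n n"
  shows "psd_mat n (L * E * transpose_mat L)"
proof -
  from E have Ec: "E \<in> carrier_mat n n" and Et: "transpose_mat E = E"
    and Ev: "\<And>v. v \<in> carrier_vec n \<Longrightarrow> 0 \<le> v \<bullet> (E *\<^sub>v v)"
    unfolding psd_mat_def by auto
  have Lt: "transpose_mat L \<in> carrier_mat n n" using L by simp
  have LE: "L * E \<in> carrier_mat n n" using L Ec by simp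
  have "transpose_mat (L * E * transpose_mat L) = transpose_mat (transpose_mat L) * transpose_mat (L * E)"
    using LE Lt by (rule transpose_mult)
  also have "\<dots> = L * (transpose_mat E * transpose_mat L)"
    using L Ec by (simp add: transpose_mult[of _ n n])
  also have "\<dots> = L * E * transpose_mat L" using L Ec Et by (simp add: assoc_mult_mat[of _ n n])
  finally have sym: "transpose_mat (L * E * transpose_mat L) = L * E * transpose_mat L" .
  have "0 \<le> v \<bullet> ((L * E * transpose_mat L) *\<^sub>v v)" if v: "v \<in> carrier_vec n" for v
  proof -
    let ?w = "transpose_mat L *\<^sub>v v"
    have "(L * E * transpose_mat L) *\<^sub>v v = L *\<^sub>v (E *\<^sub>v ?w)"
      using assoc_mult_mat_vec[OF LE Lt v] assoc_mult_mat_vec[OF L Ec] Lt v by simp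
    then have "v \<bullet> ((L * E * transpose_mat L) *\<^sub>v v) = ?w \<bullet> (E *\<^sub>v ?w)"
      using transpose_vec_mult_scalar[of L n n "E *\<^sub>v ?w" v] L Ec v Lt by simp
    also have "\<dots> \<ge> 0" using Ev[of ?w] Lt v by simp
    finally show ?thesis .
  qed
  with LE Lt sym show ?thesis unfolding psd_mat_def by (simp add: mult_carrier_mat)
qed

lemma det_one_add_psd_bounds:
  assumes M: "psd_mat n M"
  shows "1 \<le> det (1\<^sub>m n + M) \<and> ln (det (1\<^sub>m n + M)) \<le> (\<Sum>i<n. M $$ (i,i))"
proof -
  let ?S = "1\<^sub>m n + M"
  from M have Mc: "M \<in> carrier_mat n n" and Mt: "transpose_mat M = M"
    and Mv: "\<And>v. v \<in> carrier_vec n \<Longrightarrow> 0 \<le> v \<bullet> (M *\<^sub>v v)"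
    unfolding psd_mat_def by auto
  have S: "?S \<in> carrier_mat n n" using Mc by simp
  have sym: "?S $$ (i,j) = ?S $$ (j,i)" if "i < n" "j < n" for i j
    using transpose_eq_imp_entry_sym[OF Mt Mc that] that Mc by simp
  have ge_norm: "(\<Sum>i<n. (v i)\<^sup>2) \<le> quad_form n ?S v" for v
  proof -
    let ?x = "vec n v"
    have "quad_form n ?S v = ?x \<bullet> ?x + ?x \<bullet> (M *\<^sub>v ?x)"
      unfolding quad_form_eq_scalar_prod[OF S] using Mc
      by (simp add: add_mult_distrib_mat_vec[of _ n n] scalar_prod_add_distrib[of _ n])
    moreover have "?x \<bullet> ?x = (\<Sum>i<n. (v i)\<^sup>2)"
      by (simp add: scalar_prod_def atLeast0LessThan power2_eq_square)
    ultimately show ?thesis using Mv[of ?x] by simp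
  qed
  have diag: "?S $$ (i,i) = 1 + M $$ (i,i)" if "i < n" for i using that Mc by simp
  have diag_ge: "1 \<le> ?S $$ (i,i)" if "i < n" for i
    by (rule diag_ge_one_if_quad_form_ge_norm[OF ge_norm that])
  from det_bounds_if_quad_form_ge_norm[OF S sym ge_norm]
  have det_ge: "1 \<le> det ?S" and det_le: "det ?S \<le> (\<Prod>i<n. ?S $$ (i,i))" by auto
  have "ln (det ?S) \<le> ln (\<Prod>i<n. ?S $$ (i,i))" using det_ge det_le by simp
  also have "\<dots> = (\<Sum>i<n. ln (?S $$ (i,i)))"
  proof (rule ln_prod)
    fix i assume "i \<in> {..<n}"
    with diag_ge show "?S $$ (i,i) \<noteq> 0" by fastforce
  qed simp
  also have "\<dots> \<le> (\<Sum>i<n. M $$ (i,i))"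
  proof (rule sum_mono)
    fix i assume "i \<in> {..<n}"
    then have "1 \<le> ?S $$ (i,i)" "?S $$ (i,i) = 1 + M $$ (i,i)" using diag_ge diag by auto
    with ln_le_minus_one[of "?S $$ (i,i)"] show "ln (?S $$ (i,i)) \<le> M $$ (i,i)" by linarith
  qed
  finally show ?thesis using det_ge by simp
qed

lemma the_mat_inverse_eqI:
  fixes A B :: "real mat"
  assumes A: "A \<in> carrier_mat n n" and B: "B \<in> carrier_mat n n" and AB: "A * B = 1\<^sub>m n"
  shows "the (mat_inverse A) = B"
proof -
  have "det A * det B = 1" using det_mult[OF A B] AB by simp
  then have "A \<in> Units (ring_mat TYPE(real) n undefined)"
    by (intro det_non_zero_imp_unit[OF A]) auto
  then have "mat_inverse A \<noteq> None" using mat_inverse(1)[OF A, of undefined] by auto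
  then obtain C where C: "mat_inverse A = Some C" by auto
  from mat_inverse(2)[OF A C] have AC: "A * C = 1\<^sub>m n" and Cc: "C \<in> carrier_mat n n" by auto
  have "C = (B * A) * C" using mat_mult_left_right_inverse[OF A B AB] Cc by simp
  also have "\<dots> = B" using A B Cc AC by (simp add: assoc_mult_mat[of _ n n])
  finally show ?thesis using C by simp
qed

lemma the_mat_inverse_of_congruent_one:
  fixes P L :: "real mat"
  assumes P: "P \<in> carrier_mat n n" and L: "L \<in> carrier_mat n n"
    and LP: "L * P * transpose_mat L = 1\<^sub>m n"
  shows "the (mat_inverse P) = transpose_mat L * L"
proof -
  have LPc: "L * P \<in> carrier_mat n n" and Lt: "transpose_mat L \<in> carrier_mat n n" using L P by auto
  have "transpose_mat L * (L * P) = 1\<^sub>m n" by (rule mat_mult_left_right_inverse[OF LPc Lt LP])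
  then have "transpose_mat L * L * P = 1\<^sub>m n" using L P by (simp add: assoc_mult_mat[of _ n n])
  then have "P * (transpose_mat L * L) = 1\<^sub>m n"
    using mat_mult_left_right_inverse[OF mult_carrier_mat[OF Lt L] P] by simp
  then show ?thesis using P L by (intro the_mat_inverse_eqI) auto
qed

lemma ln_det_add_psd_le:
  fixes P E :: "real mat"
  assumes P: "pos_def_mat n P" and E: "psd_mat n E"
  shows "0 < det P \<and> det P \<le> det (P + E) \<and>
    ln (det (P + E)) - ln (det P) \<le> frob_norm (the (mat_inverse P)) * frob_norm E"
proof -
  from P have Pc: "P \<in> carrier_mat n n" and Pt: "transpose_mat P = P"
    and Pv: "\<And>v. v \<in> carrier_vec n \<Longrightarrow> v \<noteq> 0\<^sub>v n \<Longrightarrow> 0 < v \<bullet> (P *\<^sub>v v)"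
    unfolding pos_def_mat_def by auto
  have Ec: "E \<in> carrier_mat n n" using E unfolding psd_mat_def by simp
  have pos: "0 < quad_form n P v" if "\<exists>i<n. v i \<noteq> 0" for v
  proof -
    from that have "vec n v \<noteq> 0\<^sub>v n" by (metis index_vec index_zero_vec(1))
    then show ?thesis using Pv[of "vec n v"] quad_form_eq_scalar_prod[OF Pc, of v] by simp
  qed
  obtain L where L: "L \<in> carrier_mat n n" and LP: "L * P * transpose_mat L = 1\<^sub>m n"
    using pos_def_congruent_one[OF Pc transpose_eq_imp_entry_sym[OF Pt Pc] pos] by blast
  have det_L: "det L * det P * det L = 1"
    using arg_cong[OF LP, of det] L Pc by (simp add: det_mult[of _ n] det_transpose)
  then have "det L \<noteq> 0" by auto
  then have "0 < det L * det L" by (metis not_real_square_gt_zero)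
  moreover have "0 < det P * (det L * det L)" using det_L by (simp add: algebra_simps)
  ultimately have det_P: "0 < det P" by (metis zero_less_mult_pos2 mult.commute)
  define M where "M = L * E * transpose_mat L"
  have M: "psd_mat n M" unfolding M_def by (rule psd_mat_congruence[OF E L])
  have congr: "L * (P + E) * transpose_mat L = 1\<^sub>m n + M"
    unfolding M_def using L Pc Ec LP
    by (simp add: mult_add_distrib_mat[of _ n n] add_mult_distrib_mat[of _ n n])
  have "det (1\<^sub>m n + M) = det L * det (P + E) * det L"
    unfolding congr[symmetric] using L Pc Ec by (simp add: det_mult[of _ n] det_transpose)
  then have det_PE: "det (P + E) = det (1\<^sub>m n + M) * det P"
    using det_L by (simp add: algebra_simps)
  note bounds = det_one_add_psd_bounds[OF M]
  have "ln (det (P + E)) - ln (det P) = ln (det (1\<^sub>m n + M))"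
    using det_PE det_P bounds by (simp add: ln_mult)
  also have "\<dots> \<le> (\<Sum>i<n. M $$ (i,i))" using bounds by simp
  also have "\<dots> = (\<Sum>j<n. \<Sum>l<n. (transpose_mat L * L) $$ (j,l) * E $$ (j,l))"
    unfolding M_def by (rule trace_congruence_eq_frob_inner[OF L Ec])
  also have "\<dots> \<le> frob_norm (transpose_mat L * L) * frob_norm E"
    using L Ec by (intro frob_inner_le_frob_norm) auto
  also have "transpose_mat L * L = the (mat_inverse P)"
    by (rule the_mat_inverse_of_congruent_one[OF Pc L LP, symmetric])
  finally show ?thesis using det_PE det_P bounds by simp
qed

lemma pos_def_add_psd:
  assumes G: "psd_mat n G" and D: "pos_def_mat n D"
  shows "pos_def_mat n (G + D)"
proof -
  from G D have Gc: "G \<in> carrier_mat n n" and Dc: "D \<in> carrier_mat n n"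
    unfolding psd_mat_def pos_def_mat_def by auto
  have "0 < v \<bullet> ((G + D) *\<^sub>v v)" if v: "v \<in> carrier_vec n" "v \<noteq> 0\<^sub>v n" for v
  proof -
    have "v \<bullet> ((G + D) *\<^sub>v v) = v \<bullet> (G *\<^sub>v v) + v \<bullet> (D *\<^sub>v v)"
      using Gc Dc v by (simp add: add_mult_distrib_mat_vec[of _ n n] scalar_prod_add_distrib[of _ n])
    moreover have "0 \<le> v \<bullet> (G *\<^sub>v v)" using G v unfolding psd_mat_def by auto
    moreover have "0 < v \<bullet> (D *\<^sub>v v)" using D v unfolding pos_def_mat_def by auto
    ultimately show ?thesis by simp
  qed
  with G D Gc Dc show ?thesis
    unfolding psd_mat_def pos_def_mat_def by (simp add: transpose_add)
qed

lemma ln_det_loewner_bounds: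
  fixes G K D :: "real mat"
  assumes G: "psd_mat n G" and GK: "loewner_le n G K" and K: "K \<in> carrier_mat n n"
    and D: "pos_def_mat n D"
  shows "ln (det (G + D)) \<le> ln (det (K + D)) \<and>
    ln (det (K + D)) - ln (det (G + D)) \<le> frob_norm (the (mat_inverse (G + D))) * frob_norm (K - G)"
proof -
  have "G + D + (K - G) = K + D"
    using G D K unfolding psd_mat_def pos_def_mat_def by (intro eq_matI) auto
  with ln_det_add_psd_le[OF pos_def_add_psd[OF G D] GK[unfolded loewner_le_def]]
  show ?thesis by auto
qed

lemma pos_def_diagonal_mat:
  assumes "\<And>i. i < n \<Longrightarrow> 0 < d i"
  shows "pos_def_mat n (mat n n (\<lambda>(i,j). if i = j then d i else 0))"
proof -
  let ?D = "mat n n (\<lambda>(i,j). if i = j then d i else 0)"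
  have "0 < v \<bullet> (?D *\<^sub>v v)" if v: "v \<in> carrier_vec n" "v \<noteq> 0\<^sub>v n" for v
  proof -
    from v obtain k where k: "k < n" "v $ k \<noteq> 0"
      by (metis carrier_vecD eq_vecI index_zero_vec(1,2))
    have "0 < d k * (v $ k)\<^sup>2" using k assms by simp
    also have "\<dots> \<le> (\<Sum>i<n. d i * (v $ i)\<^sup>2)"
      using k assms by (intro member_le_sum) (auto simp: zero_le_mult_iff less_imp_le)
    also have "\<dots> = v \<bullet> (?D *\<^sub>v v)"
      using v by (simp add: scalar_prod_def atLeast0LessThan if_distrib if_distribR power2_eq_square
          mult.commute mult.left_commute cong: if_cong)
    finally show ?thesis .
  qed
  then show ?thesis unfolding pos_def_mat_def by (auto intro!: eq_matI)
qed

lemma Delta_inv_eq: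
  assumes "p < n" "p < n'"
  shows "Delta_inv p n n' = mat (Nsize p n n') (Nsize p n n')
     (\<lambda>(i,j). if i = j then (if i < n - p then 2 * real (n - p) else 2 * real (n' - p)) else 0)"
    (is "_ = ?D")
  unfolding Delta_inv_def
proof (rule the_mat_inverse_eqI)
  show "Delta p n n' * ?D = 1\<^sub>m (Nsize p n n')"
  proof (rule eq_matI)
    fix i j assume "i < dim_row (1\<^sub>m (Nsize p n n') :: real mat)" "j < dim_col (1\<^sub>m (Nsize p n n') :: real mat)"
    then have i: "i < Nsize p n n'" and j: "j < Nsize p n n'" by auto
    have "(Delta p n n' * ?D) $$ (i,j) = (\<Sum>k<Nsize p n n'. Delta p n n' $$ (i,k) * ?D $$ (k,j))"
      using i j by (simp add: Delta_def scalar_prod_def atLeast0LessThan)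
    also have "\<dots> = (\<Sum>k<Nsize p n n'. if k = i then Delta p n n' $$ (i,i) * ?D $$ (i,j) else 0)"
      using i by (intro sum.cong refl) (auto simp: Delta_def)
    also have "\<dots> = 1\<^sub>m (Nsize p n n') $$ (i,j)"
      using i j assms by (auto simp: Delta_def)
    finally show "(Delta p n n' * ?D) $$ (i,j) = 1\<^sub>m (Nsize p n n') $$ (i,j)" .
  qed (auto simp: Delta_def)
qed (auto simp: Delta_def)

lemma Delta_inv_pos_def:
  assumes "p < n" "p < n'"
  shows "pos_def_mat (Nsize p n n') (Delta_inv p n n')"
  unfolding Delta_inv_eq[OF assms] using assms by (intro pos_def_diagonal_mat) auto

lemma exp_neg_convex_comb_bounds:
  fixes \<alpha> :: real
  assumes "0 \<le> \<alpha>" "\<alpha> \<le> 1" "a \<le> A \<and> A - a \<le> u" "b \<le> B \<and> B - b \<le> w"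
  shows "exp (- (c + ((1 - \<alpha>) * A + \<alpha> * B))) \<le> exp (- c - ((1 - \<alpha>) * a + \<alpha> * b)) \<and>
    exp (- c - ((1 - \<alpha>) * a + \<alpha> * b)) \<le> exp ((1 - \<alpha>) * u + \<alpha> * w) * exp (- (c + ((1 - \<alpha>) * A + \<alpha> * B)))"
proof -
  have "(1 - \<alpha>) * a \<le> (1 - \<alpha>) * A" "\<alpha> * b \<le> \<alpha> * B"
    using assms by (simp_all add: mult_left_mono)
  moreover have "(1 - \<alpha>) * (A - a) \<le> (1 - \<alpha>) * u" "\<alpha> * (B - b) \<le> \<alpha> * w"
    using assms by (simp_all add: mult_left_mono)
  ultimately show ?thesis by (simp add: exp_add[symmetric] algebra_simps)
qed

theorem theorem3:
  fixes p :: nat and \<alpha> :: real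
    and \<kappa>1 :: "'a list \<Rightarrow> 'a list \<Rightarrow> real" and \<kappa>2 :: "'a \<Rightarrow> 'a \<Rightarrow> real"
    and x x' :: "'a list" and G1 G2 :: "real mat"
  assumes "p \<ge> 1" and "0 < \<alpha>" and "\<alpha> \<le> 1"
    and "pd_kernel {xs. length xs = p} \<kappa>1" and "pd_kernel UNIV \<kappa>2"
    and "length x > p" and "length x' > p"
  defines "n \<equiv> length x" and "n' \<equiv> length x'"
  defines "N \<equiv> Nsize p n n'"
  defines "K1 \<equiv> K1_mat p \<kappa>1 x x'" and "K2 \<equiv> K2_mat p \<kappa>2 x x'"
  assumes "psd_mat N G1" and "psd_mat N G2"
    and "loewner_le N G1 K1" and "loewner_le N G2 (K1 + K2)"
  defines "\<epsilon>1 \<equiv> K1 - G1" and "\<epsilon>2 \<equiv> K1 + K2 - G2"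
  defines "\<rho> \<equiv> exp ((1 - \<alpha>) * frob_norm (grad_g p n n' G1) * frob_norm \<epsilon>1
                   + \<alpha> * frob_norm (grad_g p n n' G2) * frob_norm \<epsilon>2) - 1"
  shows "exp (- phi_kernel p \<alpha> \<kappa>1 \<kappa>2 x x') \<le> exp (- C_const p n n' - f_fun p n n' \<alpha> G1 G2)
       \<and> exp (- C_const p n n' - f_fun p n n' \<alpha> G1 G2) \<le> (1 + \<rho>) * exp (- phi_kernel p \<alpha> \<kappa>1 \<kappa>2 x x')"
proof -
  have pn: "p < n" "p < n'" using assms(6,7) unfolding n_def n'_def by auto
  have N: "N = (n - p) + (n' - p)" unfolding N_def Nsize_def using pn by simp
  have K1: "K1 \<in> carrier_mat N N" and K2: "K2 \<in> carrier_mat N N"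
    unfolding K1_def K1_mat_def K2_def K2_mat_def gram_def windows_def targets_def N n_def n'_def
    by auto
  have K12: "K1 + K2 \<in> carrier_mat N N" using K1 K2 by simp
  have D: "pos_def_mat N (Delta_inv p n n')"
    unfolding N_def by (rule Delta_inv_pos_def[OF pn])
  have "phi_kernel p \<alpha> \<kappa>1 \<kappa>2 x x' = C_const p n n' + f_fun p n n' \<alpha> K1 (K1 + K2)"
    unfolding phi_kernel_def Let_def K1_def K2_def n_def n'_def ..
  then show ?thesis
    using exp_neg_convex_comb_bounds[OF _ \<open>\<alpha> \<le> 1\<close>
        ln_det_loewner_bounds[OF \<open>psd_mat N G1\<close> \<open>loewner_le N G1 K1\<close> K1 D]
        ln_det_loewner_bounds[OF \<open>psd_mat N G2\<close> \<open>loewner_le N G2 (K1 + K2)\<close> K12 D]]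
      \<open>0 < \<alpha>\<close>
    unfolding \<rho>_def \<epsilon>1_def \<epsilon>2_def f_fun_def g_fun_def grad_g_def
    by (simp add: mult.assoc)
qed

end
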